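(* Let $(X,\pi)$ be a finite symmetric two-player zero-sum game, i.e. $\pi(x,y)=-\pi(y,x)$ for all $x,y\in X$. Imitation is subject to a money pump in $(X,\pi)$ if and only if $(X,\pi)$ is a generalized rock-paper-scissors game.
   Context: $\pi(x,y)$ is the payoff of the player choosing $x$ against $y$. Relative payoff: $\Delta(x,y)=\pi(x,y)-\pi(y,x)$. Imitate-the-best: given initial $y_0\in X$ and any opponent sequence $(x_t)_{t\ge0}$, $y_t=x_{t-1}$ if $\Delta(x_{t-1},y_{t-1})>0$ and $y_t=y_{t-1}$ otherwise. Imitation is not subject to a money pump if there is $M\in\mathbb{R}_+$ such that for every $y_0\in X$ and every sequence $(x_t)$, $\limsup_{T\to\infty}\sum_{t=0}^T\Delta(x_t,y_t)\le M$; otherwise it is subject to a money pump. A symmetric zero-sum game $(Y,\pi)$ is a generalized rock-paper-scissors matrix if for every $y\in Y$ there is $x\in Y$ with $\pi(x,y)>0$; $(X,\pi)$ is a generalized rock-paper-scissors game if some nonempty $\bar X\subseteq X$ makes $(\bar X,\pi|_{\bar X\times\bar X})$ a generalized rock-paper-scissors matrix. *)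

theory Defs
  imports "HOL-Analysis.Analysis"
begin

text \<open>A game is a strategy set X together with a payoff function p, where p x y is the
payoff of the player choosing x against y.\<close>

definition rel_payoff :: "('a \<Rightarrow> 'a \<Rightarrow> real) \<Rightarrow> 'a \<Rightarrow> 'a \<Rightarrow> real" where
  "rel_payoff p x y = p x y - p y x"

fun imitate :: "('a \<Rightarrow> 'a \<Rightarrow> real) \<Rightarrow> 'a \<Rightarrow> (nat \<Rightarrow> 'a) \<Rightarrow> nat \<Rightarrow> 'a" where
  "imitate p y0 xs 0 = y0"
| "imitate p y0 xs (Suc t) =
     (if rel_payoff p (xs t) (imitate p y0 xs t) > 0 then xs t else imitate p y0 xs t)"

definition not_money_pump :: "'a set \<Rightarrow> ('a \<Rightarrow> 'a \<Rightarrow> real) \<Rightarrow> bool" where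
  "not_money_pump X p \<longleftrightarrow>
     (\<exists>M::real. M \<ge> 0 \<and>
        (\<forall>y0\<in>X. \<forall>xs. (\<forall>t. xs t \<in> X) \<longrightarrow>
           limsup (\<lambda>T. ereal (\<Sum>t\<le>T. rel_payoff p (xs t) (imitate p y0 xs t))) \<le> ereal M))"

definition money_pump :: "'a set \<Rightarrow> ('a \<Rightarrow> 'a \<Rightarrow> real) \<Rightarrow> bool" where
  "money_pump X p \<longleftrightarrow> \<not> not_money_pump X p"

definition symmetric_zero_sum :: "'a set \<Rightarrow> ('a \<Rightarrow> 'a \<Rightarrow> real) \<Rightarrow> bool" where
  "symmetric_zero_sum X p \<longleftrightarrow> (\<forall>x\<in>X. \<forall>y\<in>X. p x y = - p y x)"

definition gen_rps_matrix :: "'a set \<Rightarrow> ('a \<Rightarrow> 'a \<Rightarrow> real) \<Rightarrow> bool" where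
  "gen_rps_matrix Y p \<longleftrightarrow> symmetric_zero_sum Y p \<and> (\<forall>y\<in>Y. \<exists>x\<in>Y. p x y > 0)"

definition gen_rps_game :: "'a set \<Rightarrow> ('a \<Rightarrow> 'a \<Rightarrow> real) \<Rightarrow> bool" where
  "gen_rps_game X p \<longleftrightarrow> (\<exists>Xb. Xb \<noteq> {} \<and> Xb \<subseteq> X \<and> gen_rps_matrix Xb p)"

end

theory Submission
  imports Defs
begin

text \<open>In a symmetric zero-sum game the relative payoff is twice the payoff, so the imitator
switches exactly to strategies that beat its current one. If no nonempty subset is a
generalized rock-paper-scissors matrix, then ``beats'' is well founded: a nonempty set without
a minimal element would itself be such a matrix. The imitator therefore only moves down a
well-founded relation and never returns to a strategy it has left; the opponent's relative
payoff is positive only in the at most \<open>|X|\<close> rounds in which the imitator switches, which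
bounds the cumulative sum. Conversely, inside a generalized rock-paper-scissors matrix the opponent can
always play a strategy beating the imitator's current one; the imitator copies it, and the
opponent gains at least a fixed \<open>\<delta> > 0\<close> in every round.\<close>

lemma rel_payoff_symmetric_zero_sum:
  assumes "symmetric_zero_sum X p" "x \<in> X" "y \<in> X"
  shows "rel_payoff p x y = 2 * p x y"
  using assms unfolding symmetric_zero_sum_def rel_payoff_def by (metis mult_2 diff_minus_eq_add)

lemma symmetric_zero_sum_subset:
  "symmetric_zero_sum X p \<Longrightarrow> Y \<subseteq> X \<Longrightarrow> symmetric_zero_sum Y p"
  unfolding symmetric_zero_sum_def by blast

definition beats :: "'a set \<Rightarrow> ('a \<Rightarrow> 'a \<Rightarrow> real) \<Rightarrow> ('a \<times> 'a) set" where
  "beats X p = {(x, y). x \<in> X \<and> y \<in> X \<and> p x y > 0}"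

lemma wf_beats_if_not_gen_rps_game:
  assumes sz: "symmetric_zero_sum X p" and no_rps: "\<not> gen_rps_game X p"
  shows "wf (beats X p)"
proof (rule wfI_min, rule ccontr)
  fix x S assume "x \<in> S" and "\<not> (\<exists>z\<in>S. \<forall>y. (y, z) \<in> beats X p \<longrightarrow> y \<notin> S)"
  then have no_min: "\<forall>z\<in>S. \<exists>y\<in>S. (y, z) \<in> beats X p"
    by blast
  then have "x \<in> S \<inter> X"
    using \<open>x \<in> S\<close> unfolding beats_def by blast
  moreover have "gen_rps_matrix (S \<inter> X) p"
    unfolding gen_rps_matrix_def
  proof
    show "symmetric_zero_sum (S \<inter> X) p"
      using sz by (rule symmetric_zero_sum_subset) blast
    show "\<forall>y\<in>S \<inter> X. \<exists>x\<in>S \<inter> X. 0 < p x y"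
      using no_min unfolding beats_def by blast
  qed
  ultimately have "gen_rps_game X p"
    unfolding gen_rps_game_def by (intro exI[of _ "S \<inter> X"]) blast
  with no_rps show False ..
qed

lemma imitate_in:
  assumes "y0 \<in> X" "\<And>t. xs t \<in> X"
  shows "imitate p y0 xs t \<in> X"
  using assms by (induction t) auto

lemma imitate_switch_beats:
  assumes sz: "symmetric_zero_sum X p" and "y0 \<in> X" and xs: "\<And>t. xs t \<in> X"
    and switch: "rel_payoff p (xs t) (imitate p y0 xs t) > 0"
  shows "(imitate p y0 xs (Suc t), imitate p y0 xs t) \<in> beats X p"
proof -
  have "xs t \<in> X" "imitate p y0 xs t \<in> X"
    using xs imitate_in[of y0 X xs] \<open>y0 \<in> X\<close> by blast+
  with switch show ?thesis
    by (simp add: beats_def rel_payoff_symmetric_zero_sum[OF sz])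
qed

text \<open>A later strict descent lies below an earlier one in \<open>R\<^sup>+\<close>, which is irreflexive.\<close>

lemma inj_on_descent_times:
  assumes wf: "wf R" and steps: "\<And>t. (f (Suc t), f t) \<in> R\<^sup>*"
  shows "inj_on f {t. (f (Suc t), f t) \<in> R}"
proof -
  have chain: "(f j, f s) \<in> R\<^sup>*" if "s \<le> j" for s j
    using that
  proof (induction j rule: dec_induct)
    case (step n)
    then show ?case
      using steps[of n] by (meson rtrancl_trans)
  qed simp
  have below: "(f t, f s) \<in> R\<^sup>+" if "s < t" "(f (Suc s), f s) \<in> R" for s t
    using chain[of "Suc s" t] that by (simp add: rtrancl_into_trancl1)
  have irrefl: "(y, y) \<notin> R\<^sup>+" for y
    using wf_trancl[OF wf] by (rule wf_not_refl)
  show ?thesis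
  proof (rule inj_onI)
    fix s t assume "s \<in> {t. (f (Suc t), f t) \<in> R}" "t \<in> {t. (f (Suc t), f t) \<in> R}" "f s = f t"
    then show "s = t"
      using below[of s t] below[of t s] irrefl by (metis linorder_neqE_nat mem_Collect_eq)
  qed
qed

lemma sum_le_card_pos_times_bound:
  fixes d :: "nat \<Rightarrow> real"
  assumes "\<And>t. d t \<le> D" "D \<ge> 0" "card {t. t \<le> T \<and> d t > 0} \<le> N"
  shows "(\<Sum>t\<le>T. d t) \<le> real N * D"
proof -
  have "(\<Sum>t\<le>T. d t) \<le> (\<Sum>t\<le>T. if d t > 0 then D else 0)"
    using assms(1) by (intro sum_mono) auto
  also have "\<dots> = real (card {t. t \<le> T \<and> d t > 0}) * D"
    by (simp add: sum.If_cases Int_def atMost_def conj_commute)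
  also have "\<dots> \<le> real N * D"
    using assms(2,3) by (intro mult_right_mono) auto
  finally show ?thesis .
qed

lemma not_money_pump_if_not_gen_rps_game:
  assumes fin: "finite X" and sz: "symmetric_zero_sum X p" and no_rps: "\<not> gen_rps_game X p"
  shows "not_money_pump X p"
proof -
  define D where "D = Max (insert 0 ((\<lambda>(a, b). rel_payoff p a b) ` (X \<times> X)))"
  have D_nonneg: "D \<ge> 0" and D_bound: "\<And>a b. a \<in> X \<Longrightarrow> b \<in> X \<Longrightarrow> rel_payoff p a b \<le> D"
    unfolding D_def using fin by (auto intro!: Max_ge)
  have "limsup (\<lambda>T. ereal (\<Sum>t\<le>T. rel_payoff p (xs t) (imitate p y0 xs t)))
          \<le> ereal (real (card X) * D)"
    if y0: "y0 \<in> X" and xs: "\<forall>t. xs t \<in> X" for y0 xs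
  proof -
    define ys where "ys = imitate p y0 xs"
    define d where "d t = rel_payoff p (xs t) (ys t)" for t
    have ys_in: "ys t \<in> X" for t
      unfolding ys_def using imitate_in[of y0 X xs] y0 xs by blast
    have switch: "(ys (Suc t), ys t) \<in> beats X p" if "d t > 0" for t
      using imitate_switch_beats[OF sz y0] xs that unfolding ys_def d_def by blast
    have stay: "ys (Suc t) = ys t" if "\<not> d t > 0" for t
      using that unfolding ys_def d_def by simp
    have "(ys (Suc t), ys t) \<in> (beats X p)\<^sup>*" for t
      using switch[of t] stay[of t] by (cases "d t > 0") auto
    with wf_beats_if_not_gen_rps_game[OF sz no_rps]
    have "inj_on ys {t. (ys (Suc t), ys t) \<in> beats X p}"
      by (rule inj_on_descent_times)
    moreover have "{t. t \<le> T \<and> d t > 0} \<subseteq> {t. (ys (Suc t), ys t) \<in> beats X p}" for T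
      using switch by blast
    ultimately have "card {t. t \<le> T \<and> d t > 0} \<le> card X" for T
      using fin ys_in by (intro card_inj_on_le) (auto intro: inj_on_subset)
    then have "(\<Sum>t\<le>T. d t) \<le> real (card X) * D" for T
      using D_bound D_nonneg xs ys_in unfolding d_def
      by (intro sum_le_card_pos_times_bound) auto
    then show ?thesis
      unfolding d_def ys_def by (intro Limsup_bounded always_eventually) simp
  qed
  then show ?thesis
    unfolding not_money_pump_def using D_nonneg by (intro exI[of _ "real (card X) * D"]) auto
qed

lemma limsup_partial_sums_infinite:
  fixes d :: "nat \<Rightarrow> real"
  assumes "\<delta> > 0" "\<And>t. \<delta> \<le> d t"
  shows "limsup (\<lambda>T. ereal (\<Sum>t\<le>T. d t)) = \<infinity>"
proof (rule lim_imp_Limsup)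
  have lim: "LIM T sequentially. real T * \<delta> :> at_top"
    using assms(1) by (intro filterlim_at_top_mult_tendsto_pos filterlim_real_sequentially) auto
  have le: "real T * \<delta> \<le> (\<Sum>t\<le>T. d t)" for T
  proof -
    have "real T * \<delta> \<le> (\<Sum>t\<le>T. \<delta>)"
      using assms(1) by simp
    also have "\<dots> \<le> (\<Sum>t\<le>T. d t)"
      using assms(2) by (rule sum_mono)
    finally show ?thesis .
  qed
  show "((\<lambda>T. ereal (\<Sum>t\<le>T. d t)) \<longlongrightarrow> \<infinity>) sequentially"
    unfolding tendsto_PInfty_eq_at_top using lim by (rule filterlim_at_top_mono) (simp add: le)
qed simp

lemma imitate_against_response:
  assumes "y0 \<in> Y" and closed: "\<And>y. y \<in> Y \<Longrightarrow> b y \<in> Y"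
    and gain: "\<And>y. y \<in> Y \<Longrightarrow> rel_payoff p (b y) y > 0"
  shows "imitate p y0 (\<lambda>t. b ((b ^^ t) y0)) t = (b ^^ t) y0"
proof -
  have "(b ^^ t) y0 \<in> Y" for t
    using \<open>y0 \<in> Y\<close> closed by (induction t) auto
  then show ?thesis
    using gain by (induction t) auto
qed

lemma money_pump_if_gen_rps_game:
  assumes fin: "finite X" and sz: "symmetric_zero_sum X p" and rps: "gen_rps_game X p"
  shows "money_pump X p"
proof -
  obtain Y where "Y \<noteq> {}" "Y \<subseteq> X" "gen_rps_matrix Y p"
    using rps unfolding gen_rps_game_def by blast
  then obtain b where b: "\<And>y. y \<in> Y \<Longrightarrow> b y \<in> Y \<and> p (b y) y > 0"
    unfolding gen_rps_matrix_def by metis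
  obtain y0 where y0: "y0 \<in> Y"
    using \<open>Y \<noteq> {}\<close> by blast
  have gain_pos: "rel_payoff p (b y) y > 0" if "y \<in> Y" for y
  proof -
    have "b y \<in> X" "y \<in> X"
      using b[OF that] that \<open>Y \<subseteq> X\<close> by auto
    then show ?thesis
      using b[OF that] by (simp add: rel_payoff_symmetric_zero_sum[OF sz])
  qed
  have closed: "b y \<in> Y" if "y \<in> Y" for y
    using b[OF that] ..
  have orbit_in: "(b ^^ t) y0 \<in> Y" for t
    using y0 closed by (induction t) auto
  define xs where "xs t = b ((b ^^ t) y0)" for t
  define \<delta> where "\<delta> = Min ((\<lambda>y. rel_payoff p (b y) y) ` Y)"
  have fin_Y: "finite Y"
    using fin \<open>Y \<subseteq> X\<close> by (rule finite_subset[rotated])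
  have "\<delta> > 0"
    unfolding \<delta>_def using fin_Y \<open>Y \<noteq> {}\<close> gain_pos by (subst Min_gr_iff) auto
  moreover have "\<delta> \<le> rel_payoff p (xs t) (imitate p y0 xs t)" for t
  proof -
    have "imitate p y0 xs t = (b ^^ t) y0"
      unfolding xs_def using y0 closed gain_pos by (rule imitate_against_response)
    then show ?thesis
      unfolding \<delta>_def xs_def using fin_Y orbit_in by (intro Min_le) auto
  qed
  ultimately have pump: "limsup (\<lambda>T. ereal (\<Sum>t\<le>T. rel_payoff p (xs t) (imitate p y0 xs t))) = \<infinity>"
    by (rule limsup_partial_sums_infinite)
  moreover have "y0 \<in> X" "\<forall>t. xs t \<in> X"
    using y0 orbit_in closed \<open>Y \<subseteq> X\<close> unfolding xs_def by auto
  moreover have "\<not> \<infinity> \<le> ereal M" for M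
    by simp
  ultimately show ?thesis
    unfolding money_pump_def not_money_pump_def by metis
qed

theorem corollary2:
  fixes X :: "'a set" and p :: "'a \<Rightarrow> 'a \<Rightarrow> real"
  assumes "finite X"
    and "symmetric_zero_sum X p"
  shows "money_pump X p \<longleftrightarrow> gen_rps_game X p"
  using not_money_pump_if_not_gen_rps_game[OF assms] money_pump_if_gen_rps_game[OF assms]
  unfolding money_pump_def by blast

end
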